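(* Let $N=\{1,\dots,n\}$ be a set of agents, let $\tau\ge 0$ and $g\ge 0$ be fees, and for each $i\in N$ let $V_i:\mathbb{R}_+\to\mathbb{R}$ be strictly concave and differentiable with $V_i'(0)=\infty$, and let $C_i:\mathbb{R}_+\to\mathbb{R}$ be convex, differentiable and Lipschitz continuous. For $\mu\ge 0$ define the payoff $U_i(x_i;\mu)=V_i(x_i)-C_i(x_i)-(\tau+\mu)x_i-g\,\mathbf{1}\{x_i>0\}$ and let $x_i^\star(\mu)\in\arg\max_{x_i\ge 0}U_i(x_i;\mu)$ be the best response of agent $i$. Then each best response is bounded: for each $i\in N$ there is $\bar{x}_i<\infty$ such that \[ 0\le x_i^\star(\mu)\le \bar{x}_i \quad\text{for all } \mu\ge 0. \]
   Context: Agents share a resource pool; $x_i\ge 0$ is the quantity requested by agent $i$, $\tau$ is a per-unit transaction fee, $g$ a fixed execution fee charged if $x_i>0$, and $\mu$ a shadow price for the capacity constraint. $\mathbf{1}\{x_i>0\}$ is the indicator of $x_i>0$. *)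

theory Defs
  imports "HOL-Analysis.Analysis"
begin

definition strict_concave_on :: "real set \<Rightarrow> (real \<Rightarrow> real) \<Rightarrow> bool" where
  "strict_concave_on S f \<longleftrightarrow>
     (\<forall>x\<in>S. \<forall>y\<in>S. x \<noteq> y \<longrightarrow> (\<forall>t::real. 0 < t \<and> t < 1 \<longrightarrow>
        f ((1 - t) * x + t * y) > (1 - t) * f x + t * f y))"

definition payoff :: "(real \<Rightarrow> real) \<Rightarrow> (real \<Rightarrow> real) \<Rightarrow> real \<Rightarrow> real \<Rightarrow> real \<Rightarrow> real \<Rightarrow> real" where
  "payoff V C \<tau> g \<mu> x = V x - C x - (\<tau> + \<mu>) * x - g * (if x > 0 then 1 else 0)"

end

theory Submission
  imports Defs
begin

text \<open>Revealed preference: the payoff at price \<open>\<mu>\<close> is the payoff at price 0 minus the linear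
  term \<open>\<mu> x\<close>, and comparing two maximizers under two linear prices shows that a higher price
  can only lower the maximizer. Hence \<open>x\<^sub>i\<^sup>\<star>(0)\<close> bounds every best response.\<close>

lemma payoff_eq_payoff_zero_price:
  "payoff V C \<tau> g \<mu> x = payoff V C \<tau> g 0 x - \<mu> * x"
  unfolding payoff_def by (simp add: algebra_simps)

lemma maximizer_antimono_in_linear_price:
  fixes f :: "real \<Rightarrow> real" and p q x z :: real
  assumes "p < q" and "x \<in> S" and "z \<in> S"
    and max_p: "\<forall>y\<in>S. f y - p * y \<le> f x - p * x"
    and max_q: "\<forall>y\<in>S. f y - q * y \<le> f z - q * z"
  shows "z \<le> x"
proof -
  have "f z - p * z \<le> f x - p * x" and "f x - q * x \<le> f z - q * z"
    using max_p max_q \<open>x \<in> S\<close> \<open>z \<in> S\<close> by auto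
  then have "(q - p) * z \<le> (q - p) * x"
    by (simp add: algebra_simps)
  then show "z \<le> x"
    using \<open>p < q\<close> by simp
qed

lemma payoff_maximizer_antimono:
  assumes "0 < \<mu>" and "0 \<le> x0" and "0 \<le> x"
    and max_0: "\<forall>y\<ge>0. payoff V C \<tau> g 0 y \<le> payoff V C \<tau> g 0 x0"
    and max_\<mu>: "\<forall>y\<ge>0. payoff V C \<tau> g \<mu> y \<le> payoff V C \<tau> g \<mu> x"
  shows "x \<le> x0"
proof -
  let ?f = "payoff V C \<tau> g 0"
  have "\<forall>y\<in>{0..}. ?f y - 0 * y \<le> ?f x0 - 0 * x0"
    using max_0 by simp
  moreover have "\<forall>y\<in>{0..}. ?f y - \<mu> * y \<le> ?f x - \<mu> * x"
    using max_\<mu> by (simp add: payoff_eq_payoff_zero_price[of V C \<tau> g \<mu>])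
  ultimately show ?thesis
    using maximizer_antimono_in_linear_price[of 0 \<mu> x0 "{0..}" x ?f] assms(1-3) by simp
qed

theorem lemma4p1:
  fixes n :: nat and \<tau> g :: real
    and V C :: "nat \<Rightarrow> real \<Rightarrow> real"
    and xstar :: "nat \<Rightarrow> real \<Rightarrow> real"
  assumes tau_nn: "\<tau> \<ge> 0" and g_nn: "g \<ge> 0"
    and V_sconc: "\<forall>i\<in>{1..n}. strict_concave_on {0..} (V i)"
    and V_cont: "\<forall>i\<in>{1..n}. continuous_on {0..} (V i)"
    and V_diff: "\<forall>i\<in>{1..n}. \<forall>x>0. V i differentiable (at x)"
    and V_inada: "\<forall>i\<in>{1..n}. filterlim (deriv (V i)) at_top (at_right 0)"
    and C_conv: "\<forall>i\<in>{1..n}. convex_on {0..} (C i)"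
    and C_diff: "\<forall>i\<in>{1..n}. C i differentiable_on {0..}"
    and C_lip: "\<forall>i\<in>{1..n}. \<exists>L. lipschitz_on L {0..} (C i)"
    and best_resp: "\<forall>i\<in>{1..n}. \<forall>\<mu>\<ge>0. xstar i \<mu> \<ge> 0 \<and>
        (\<forall>y\<ge>0. payoff (V i) (C i) \<tau> g \<mu> y \<le> payoff (V i) (C i) \<tau> g \<mu> (xstar i \<mu>))"
  shows "\<forall>i\<in>{1..n}. \<exists>xbar::real. \<forall>\<mu>\<ge>0. 0 \<le> xstar i \<mu> \<and> xstar i \<mu> \<le> xbar"
proof
  fix i assume i: "i \<in> {1..n}"
  have "0 \<le> xstar i \<mu> \<and> xstar i \<mu> \<le> xstar i 0" if "0 \<le> \<mu>" for \<mu>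
  proof (cases "\<mu> = 0")
    case False
    then show ?thesis
      using best_resp i that
      by (auto intro: payoff_maximizer_antimono[of \<mu> "xstar i 0" "xstar i \<mu>" "V i" "C i" \<tau> g])
  qed (use best_resp i in auto)
  then show "\<exists>xbar. \<forall>\<mu>\<ge>0. 0 \<le> xstar i \<mu> \<and> xstar i \<mu> \<le> xbar"
    by blast
qed

end
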